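(* Let $\alpha\in(0,1)$, $\gamma,\beta>0$, $r_0>0$, $Y=B(0,r_0)\subset\mathbb R\oplus\mathbb R^{d-1}$, $\mathcal X(x)=\|x\|^\alpha Ax$ with $A=\gamma\,\mathrm{Id}_{\mathbb R}\oplus(-\beta\,\mathrm{Id}_{\mathbb R^{d-1}})$. Let $x\colon[0,T_0]\to Y$ be a trajectory of $\mathcal X$ that leaves $Y$ at time $T_0$, $\theta(t)$ the angle between $x(t)$ and $\mathbb R\times\{0\}$, and $s\in(0,\infty)$ with $\tan\theta(0)>s>\tan\theta(T_0)$; let $T_s$ be the time with $\tan\theta(T_s)=s$. Then $\int_{T_s}^{T_0}\|x\|^\alpha\tan\theta\,dt\le\frac{s}{\gamma+\beta}$. *)

theory Defs
  imports "HOL-Analysis.Analysis"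
begin

text \<open>Points of R^d = R (+) R^(d-1) are pairs (u, v) with u :: real, v :: real^'n
  (d - 1 = CARD('n) \<ge> 1). The norm on the product type is the Euclidean one.\<close>

definition hyp_field :: "real \<Rightarrow> real \<Rightarrow> real \<Rightarrow> real \<times> (real^'n) \<Rightarrow> real \<times> (real^'n)" where
  "hyp_field \<alpha> \<gamma> \<beta> x = (norm x powr \<alpha>) *\<^sub>R (\<gamma> * fst x, (- \<beta>) *\<^sub>R snd x)"

definition axis_angle :: "real \<times> (real^'n) \<Rightarrow> real" where
  "axis_angle x = arccos (\<bar>fst x\<bar> / norm x)"

end

theory Submission imports Defs begin

text \<open>Reparametrising time by E(t) = integral of |x|^alpha over [0, t] turns the flow of
  the field into the linear flow of A: the axial coordinate grows like exp(gamma E), the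
  transverse one decays like exp(-beta E), so tan theta = tan theta(0) exp(-(gamma + beta) E).
  Hence |x|^alpha tan theta = E' tan theta is the derivative of -tan theta / (gamma + beta), and the
  integral equals (tan theta(Ts) - tan theta(T0)) / (gamma + beta) \<le> s / (gamma + beta).\<close>

lemma tan_axis_angle:
  fixes z :: "real \<times> (real^'n)"
  assumes "fst z \<noteq> 0"
  shows "tan (axis_angle z) = norm (snd z) / \<bar>fst z\<bar>"
proof -
  obtain a b where z: "z = (a, b)" by (cases z)
  have a: "a \<noteq> 0" using assms z by simp
  have nz2: "(norm z)\<^sup>2 = a\<^sup>2 + (norm b)\<^sup>2" using z by (simp add: norm_Pair)
  have npos: "norm z > 0" using a z by (simp add: zero_prod_def)
  define c where "c = \<bar>a\<bar> / norm z"
  have "\<bar>a\<bar> \<le> norm z" using z norm_fst_le[of a b] by simp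
  then have c: "0 < c" "c \<le> 1" using npos a by (auto simp: c_def)
  have "1 - c\<^sup>2 = (norm b / norm z)\<^sup>2"
    using npos nz2 a by (simp add: c_def power_divide divide_simps)
  then have sin: "sin (arccos c) = norm b / norm z"
    using c by (simp add: sin_arccos)
  have "axis_angle z = arccos c" using z by (simp add: axis_angle_def c_def)
  then have "tan (axis_angle z) = (norm b / norm z) / c"
    using c sin by (simp add: tan_def cos_arccos)
  also have "\<dots> = norm b / \<bar>a\<bar>" using npos a by (simp add: c_def)
  finally show ?thesis using z by simp
qed

lemma tan_axis_angle_nonneg: "0 \<le> tan (axis_angle z)"
proof (cases "fst z = 0")
  case True
  \<comment> \<open>the angle is \<open>pi/2\<close>, where \<open>tan\<close> takes the junk value 0\<close>
  then show ?thesis by (simp add: axis_angle_def)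
next
  case False
  then show ?thesis by (simp add: tan_axis_angle)
qed

lemma has_vector_derivative_fst:
  "(f has_vector_derivative f') F \<Longrightarrow> ((\<lambda>t. fst (f t)) has_vector_derivative fst f') F"
  using has_derivative_fst[of f "\<lambda>h. h *\<^sub>R f'" F] by (simp add: has_vector_derivative_def)

lemma has_vector_derivative_snd:
  "(f has_vector_derivative f') F \<Longrightarrow> ((\<lambda>t. snd (f t)) has_vector_derivative snd f') F"
  using has_derivative_snd[of f "\<lambda>h. h *\<^sub>R f'" F] by (simp add: has_vector_derivative_def)

lemma time_changed_linear_ode_solution:
  fixes f :: "real \<Rightarrow> 'a::real_normed_vector"
  assumes E: "\<And>t. t \<in> {a..b} \<Longrightarrow> (E has_real_derivative p t) (at t within {a..b})"
    and f: "\<And>t. t \<in> {a..b} \<Longrightarrow> (f has_vector_derivative (c * p t) *\<^sub>R f t) (at t within {a..b})"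
    and t: "t \<in> {a..b}"
  shows "f t = exp (c * (E t - E a)) *\<^sub>R f a"
proof -
  have "((\<lambda>t. exp (- c * E t) *\<^sub>R f t) has_vector_derivative 0) (at t within {a..b})"
    if "t \<in> {a..b}" for t
  proof -
    have "((\<lambda>t. exp (- c * E t)) has_real_derivative exp (- c * E t) * (- c * p t))
        (at t within {a..b})"
      by (rule DERIV_chain2[OF DERIV_exp DERIV_cmult[OF E[OF that]]])
    from has_vector_derivative_scaleR[OF this f[OF that]] show ?thesis
      by (simp add: algebra_simps)
  qed
  then obtain k where k: "\<And>t. t \<in> {a..b} \<Longrightarrow> exp (- c * E t) *\<^sub>R f t = k"
    using has_derivative_zero_constant[of "{a..b}" "\<lambda>t. exp (- c * E t) *\<^sub>R f t"]
    by (auto simp: has_vector_derivative_def)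
  have "exp (- c * E t) *\<^sub>R f t = exp (- c * E a) *\<^sub>R f a"
    using k[OF t] k[of a] t by simp
  then have "exp (c * E t) *\<^sub>R (exp (- c * E t) *\<^sub>R f t)
      = exp (c * E t) *\<^sub>R (exp (- c * E a) *\<^sub>R f a)"
    by simp
  then show ?thesis
    by (simp add: exp_add[symmetric] right_diff_distrib)
qed

lemma tan_axis_angle_hyp_field_flow:
  fixes x :: "real \<Rightarrow> real \<times> (real^'n)"
  assumes traj: "\<And>t. t \<in> {a..b} \<Longrightarrow>
                   (x has_vector_derivative hyp_field \<alpha> \<gamma> \<beta> (x t)) (at t within {a..b})"
    and E: "\<And>t. t \<in> {a..b} \<Longrightarrow> (E has_real_derivative norm (x t) powr \<alpha>) (at t within {a..b})"
    and off_axis: "fst (x a) \<noteq> 0"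
    and t: "t \<in> {a..b}"
  shows "tan (axis_angle (x t)) = tan (axis_angle (x a)) * exp (- (\<gamma> + \<beta>) * (E t - E a))"
proof -
  have fst_x: "fst (x t) = exp (\<gamma> * (E t - E a)) * fst (x a)"
    using time_changed_linear_ode_solution[OF E _ t, of "\<lambda>t. fst (x t)" \<gamma>]
      has_vector_derivative_fst[OF traj] by (simp add: hyp_field_def mult_ac)
  have snd_x: "snd (x t) = exp (- \<beta> * (E t - E a)) *\<^sub>R snd (x a)"
    using time_changed_linear_ode_solution[OF E _ t, of "\<lambda>t. snd (x t)" "- \<beta>"]
      has_vector_derivative_snd[OF traj] by (simp add: hyp_field_def mult_ac)
  have "tan (axis_angle (x t)) = norm (snd (x t)) / \<bar>fst (x t)\<bar>"
    using fst_x off_axis by (intro tan_axis_angle) simp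
  also have "\<dots> = exp (- \<beta> * (E t - E a)) / exp (\<gamma> * (E t - E a)) * tan (axis_angle (x a))"
    using fst_x snd_x off_axis by (simp add: tan_axis_angle abs_mult)
  also have "exp (- \<beta> * (E t - E a)) / exp (\<gamma> * (E t - E a)) = exp (- (\<gamma> + \<beta>) * (E t - E a))"
    by (simp add: exp_diff[symmetric] algebra_simps)
  finally show ?thesis by simp
qed

lemma integral_norm_powr_tan_axis_angle:
  fixes x :: "real \<Rightarrow> real \<times> (real^'n)"
  assumes "0 < \<alpha>" "\<gamma> + \<beta> \<noteq> 0"
    and traj: "\<And>t. t \<in> {a..b} \<Longrightarrow>
                   (x has_vector_derivative hyp_field \<alpha> \<gamma> \<beta> (x t)) (at t within {a..b})"
    and off_axis: "fst (x a) \<noteq> 0"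
    and cd: "a \<le> c" "c \<le> d" "d \<le> b"
  shows "integral {c..d} (\<lambda>t. norm (x t) powr \<alpha> * tan (axis_angle (x t)))
           = (tan (axis_angle (x c)) - tan (axis_angle (x d))) / (\<gamma> + \<beta>)"
proof -
  define p where "p t = norm (x t) powr \<alpha>" for t
  have "continuous_on {a..b} x"
    using traj has_vector_derivative_continuous continuous_on_eq_continuous_within by blast
  then have "continuous_on {a..b} p"
    unfolding p_def using \<open>0 < \<alpha>\<close>
    by (intro continuous_on_powr' continuous_on_norm continuous_on_const) auto
  define E where "E t = integral {a..t} p" for t
  have E: "(E has_real_derivative p t) (at t within {a..b})" if "t \<in> {a..b}" for t
    using integral_has_vector_derivative[OF \<open>continuous_on {a..b} p\<close> that]
    by (simp add: E_def[abs_def] has_real_derivative_iff_has_vector_derivative)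
  have flow: "tan (axis_angle (x t)) = tan (axis_angle (x a)) * exp (- (\<gamma> + \<beta>) * (E t - E a))"
    if "t \<in> {a..b}" for t
    using tan_axis_angle_hyp_field_flow[OF traj E[unfolded p_def] off_axis that] .
  define G where "G t = - tan (axis_angle (x a)) / (\<gamma> + \<beta>) * exp (- (\<gamma> + \<beta>) * (E t - E a))"
    for t
  have "(G has_vector_derivative p t * tan (axis_angle (x t))) (at t within {c..d})"
    if "t \<in> {c..d}" for t
  proof -
    have t: "t \<in> {a..b}" using that cd by auto
    have cancel: "- c / k * (e * (- k * q)) = q * (c * e)" if "k \<noteq> 0" for c k e q :: real
      using that by (simp add: field_simps)
    have "((\<lambda>t. exp (- (\<gamma> + \<beta>) * (E t - E a))) has_real_derivative
        exp (- (\<gamma> + \<beta>) * (E t - E a)) * (- (\<gamma> + \<beta>) * p t)) (at t within {a..b})"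
      by (rule DERIV_chain2[OF DERIV_exp]) (auto intro!: derivative_eq_intros E[OF t])
    from DERIV_cmult[OF this, of "- tan (axis_angle (x a)) / (\<gamma> + \<beta>)"]
    have "(G has_real_derivative p t * tan (axis_angle (x t))) (at t within {a..b})"
      unfolding G_def flow[OF t] by (rule DERIV_cong) (rule cancel, fact)
    then have "(G has_real_derivative p t * tan (axis_angle (x t))) (at t within {c..d})"
      by (rule DERIV_subset) (use cd in auto)
    then show ?thesis by (simp add: has_real_derivative_iff_has_vector_derivative)
  qed
  note integral = integral_unique[OF fundamental_theorem_of_calculus[OF \<open>c \<le> d\<close> this]]
  have "c \<in> {a..b}" "d \<in> {a..b}" using cd by auto
  show ?thesis
    using integral unfolding p_def G_def flow[OF \<open>c \<in> {a..b}\<close>] flow[OF \<open>d \<in> {a..b}\<close>]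
    by (simp add: diff_divide_distrib)
qed

theorem lemma7p4:
  fixes x :: "real \<Rightarrow> real \<times> (real^'n)"
    and \<alpha> \<gamma> \<beta> r0 T0 s Ts :: real
  assumes "0 < \<alpha>" "\<alpha> < 1" "0 < \<gamma>" "0 < \<beta>" "0 < r0"
    and traj: "\<And>t. t \<in> {0..T0} \<Longrightarrow>
                 (x has_vector_derivative hyp_field \<alpha> \<gamma> \<beta> (x t)) (at t within {0..T0})"
    and inY: "\<And>t. t \<in> {0..<T0} \<Longrightarrow> x t \<in> ball 0 r0"
    and leaves: "norm (x T0) = r0"
    and "0 < s"
    and "tan (axis_angle (x 0)) > s" "s > tan (axis_angle (x T0))"
    and "Ts \<in> {0..T0}" "tan (axis_angle (x Ts)) = s"
  shows "integral {Ts..T0} (\<lambda>t. norm (x t) powr \<alpha> * tan (axis_angle (x t))) \<le> s / (\<gamma> + \<beta>)"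
proof -
  have off_axis: "fst (x 0) \<noteq> 0"
    using \<open>0 < s\<close> \<open>tan (axis_angle (x 0)) > s\<close> by (auto simp: axis_angle_def)
  have "integral {Ts..T0} (\<lambda>t. norm (x t) powr \<alpha> * tan (axis_angle (x t)))
          = (s - tan (axis_angle (x T0))) / (\<gamma> + \<beta>)"
    using integral_norm_powr_tan_axis_angle[OF \<open>0 < \<alpha>\<close> _ traj off_axis, of Ts T0]
      \<open>Ts \<in> {0..T0}\<close> \<open>tan (axis_angle (x Ts)) = s\<close> \<open>0 < \<gamma>\<close> \<open>0 < \<beta>\<close> by simp
  also have "\<dots> \<le> s / (\<gamma> + \<beta>)"
    using tan_axis_angle_nonneg[of "x T0"] \<open>0 < \<gamma>\<close> \<open>0 < \<beta>\<close> by (simp add: divide_right_mono)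
  finally show ?thesis .
qed

end
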